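(* There is no nonzero $\phi\in L^2(\mathcal P,\lambda,\mathbb{R})$ with $T'(k)\phi=\phi$ (equality in $L^2$) for all $k$ in any of the following subgroups of $\mathrm{SO}(2)\times\mathrm{SO}(2)$: (1) $\mathrm{SO}(2)\times\mathrm{SO}(2)$; (2) $S^1\times C_N=\{(R(\theta),R(2\pi i/N)):\theta\in\mathbb{R},\ i\in\{0,\dots,N-1\}\}$, for any integer $N\ge 1$; (3) $C_N\times S^1=\{(R(2\pi i/N),R(\theta)):\theta\in\mathbb{R},\ i\in\{0,\dots,N-1\}\}$, for any integer $N\ge 1$; (4) $H(N,q_0,p_0)=\{(R(q_0\theta),R(p_0\theta+2\pi i/N)):\theta\in\mathbb{R},\ i\in\{0,\dots,N-1\}\}$, where $N\ge 1$ is an integer and $q_0,p_0$ are relatively prime integers with $p_0>0$, $q_0\neq 0$, and at least one of $N,q_0,p_0$ is even.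
   Context: $R(\theta)=\begin{pmatrix}\cos\theta & \sin\theta\\ -\sin\theta & \cos\theta\end{pmatrix}$. Let $P_1(\mathbb{R})=\mathbb{R}\cup\{\infty\}$ be the real projective line with projective coordinate $x$, and $\mathcal P=P_1(\mathbb{R})\times P_1(\mathbb{R})$ (a torus). Using angular coordinates $x=\cot(\rho/2)$, $y=\cot(\sigma/2)$, $\lambda$ is the measure on $\mathcal P$ invariant under $\mathrm{SO}(2)\times\mathrm{SO}(2)$ (Lebesgue measure $d\rho\,d\sigma$), and $L^2(\mathcal P,\lambda,\mathbb{R})$ is the real Hilbert space of square-integrable real functions on $\mathcal P$. For $g=\begin{pmatrix}a&b\\c&d\end{pmatrix}\in \mathrm{SL}(2,\mathbb{R})$ and $x\in P_1(\mathbb{R})$ put $xg=\frac{xa+c}{xb+d}$, $k_g(x)=\left(\frac{(xb+d)^2+(xa+c)^2}{1+x^2}\right)^{1/2}$, $s_g(x)=\frac{xb+d}{|xb+d|}$. The group $\mathrm{SL}(2,\mathbb{R})\times\mathrm{SL}(2,\mathbb{R})$ acts on $L^2(\mathcal P,\lambda,\mathbb{R})$ by $(T'(g,h)\phi)(x,y)=k_g^{-3}(x)s_g(x)k_h^{-3}(y)s_h(y)\phi(xg,yh)$. *)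

theory Defs
  imports "HOL-Analysis.Analysis"
begin

type_synonym mat2 = "real^2^2"

text \<open>Matrix g = (a b; c d) with a = g$1$1, b = g$1$2, c = g$2$1, d = g$2$2.\<close>

definition rot :: "real \<Rightarrow> mat2" where
  "rot \<theta> = (\<chi> i j. if i = 1 then (if j = 1 then cos \<theta> else sin \<theta>)
                    else (if j = 1 then - sin \<theta> else cos \<theta>))"

definition mat_of :: "real \<Rightarrow> real \<Rightarrow> real \<Rightarrow> real \<Rightarrow> mat2" where
  "mat_of a b c d = (\<chi> i j. if i = 1 then (if j = 1 then a else b)
                          else (if j = 1 then c else d))"

text \<open>Projective action x g = (x a + c)/(x b + d) on finite projective coordinates
 (the point at infinity is a null set; Isabelle's x/0 = 0 only affects a null set).\<close>
definition pact :: "real \<Rightarrow> mat2 \<Rightarrow> real" where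
  "pact x g = (x * g$1$1 + g$2$1) / (x * g$1$2 + g$2$2)"

definition kfac :: "mat2 \<Rightarrow> real \<Rightarrow> real" where
  "kfac g x = sqrt (((x * g$1$2 + g$2$2)^2 + (x * g$1$1 + g$2$1)^2) / (1 + x^2))"

definition sfac :: "mat2 \<Rightarrow> real \<Rightarrow> real" where
  "sfac g x = (x * g$1$2 + g$2$2) / \<bar>x * g$1$2 + g$2$2\<bar>"

definition Tprime :: "mat2 \<times> mat2 \<Rightarrow> (real \<times> real \<Rightarrow> real) \<Rightarrow> real \<times> real \<Rightarrow> real" where
  "Tprime gh \<phi> xy = (case gh of (g, h) \<Rightarrow> case xy of (x, y) \<Rightarrow>
      inverse (kfac g x ^ 3) * sfac g x * inverse (kfac h y ^ 3) * sfac h y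
      * \<phi> (pact x g, pact y h))"

text \<open>The SO(2)xSO(2)-invariant measure: Lebesgue measure d\<rho> d\<sigma> on [0,2pi)^2,
 pushed forward to projective coordinates x = cot(\<rho>/2), y = cot(\<sigma>/2).\<close>
definition lam :: "(real \<times> real) measure" where
  "lam = distr (restrict_space lborel ({0..<2*pi} \<times> {0..<2*pi})) borel
           (\<lambda>(\<rho>, \<sigma>). (cot (\<rho>/2), cot (\<sigma>/2)))"

definition SO2xSO2 :: "(mat2 \<times> mat2) set" where
  "SO2xSO2 = {(rot \<theta>, rot \<psi>) | \<theta> \<psi>. True}"

definition S1xC :: "nat \<Rightarrow> (mat2 \<times> mat2) set" where
  "S1xC N = {(rot \<theta>, rot (2*pi*real i / real N)) | \<theta> i. i < N}"

definition CxS1 :: "nat \<Rightarrow> (mat2 \<times> mat2) set" where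
  "CxS1 N = {(rot (2*pi*real i / real N), rot \<theta>) | \<theta> i. i < N}"

definition Hgrp :: "nat \<Rightarrow> int \<Rightarrow> int \<Rightarrow> (mat2 \<times> mat2) set" where
  "Hgrp N q0 p0 = {(rot (of_int q0 * \<theta>), rot (of_int p0 * \<theta> + 2*pi*real i / real N)) | \<theta> i. i < N}"

end

theory Submission
  imports Defs
begin

text \<open>Each of the four subgroups contains \<open>(-I, I)\<close> or \<open>(I, -I)\<close>. Such an element fixes every
 point of the torus and has multiplier \<open>k = 1\<close>, but its sign factors \<open>s\<close> multiply to \<open>-1\<close>,
 so \<open>T'\<close> acts by \<open>\<phi> \<mapsto> -\<phi>\<close> and an invariant \<open>\<phi>\<close> vanishes almost everywhere.\<close>

lemma rot_entries:
  "rot a $1$1 = cos a" "rot a $1$2 = sin a" "rot a $2$1 = - sin a" "rot a $2$2 = cos a"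
  by (simp_all add: rot_def)

lemma kfac_rot: "kfac (rot a) x = 1"
proof -
  have "(x * sin a + cos a)\<^sup>2 + (x * cos a - sin a)\<^sup>2 = (1 + x\<^sup>2) * ((sin a)\<^sup>2 + (cos a)\<^sup>2)"
    by algebra
  also have "\<dots> = 1 + x\<^sup>2" by simp
  finally have "(x * sin a + cos a)\<^sup>2 + (x * cos a - sin a)\<^sup>2 = 1 + x\<^sup>2" .
  moreover have "1 + x\<^sup>2 \<noteq> 0"
    by (metis add_nonneg_eq_0_iff zero_le_power2 zero_neq_one zero_le_one)
  ultimately show ?thesis by (simp add: kfac_def rot_entries)
qed

lemma
  assumes "sin a = 0"
  shows pact_rot_sin_eq_0: "pact x (rot a) = x"
    and sfac_rot_sin_eq_0: "sfac (rot a) x = cos a"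
proof -
  have "\<bar>cos a\<bar> = 1"
    using sin_cos_squared_add[of a] assms by (auto simp: power2_eq_1_iff)
  then show "pact x (rot a) = x" "sfac (rot a) x = cos a"
    using assms by (auto simp: pact_def sfac_def rot_entries)
qed

lemma Tprime_rot_sin_eq_0:
  assumes "sin a = 0" "sin b = 0"
  shows "Tprime (rot a, rot b) \<phi> z = cos a * cos b * \<phi> z"
  using assms by (cases z) (simp add: Tprime_def kfac_rot pact_rot_sin_eq_0 sfac_rot_sin_eq_0)

definition has_sign_reversing_element :: "(mat2 \<times> mat2) set \<Rightarrow> bool" where
  "has_sign_reversing_element G \<longleftrightarrow>
     (\<exists>a b. (rot a, rot b) \<in> G \<and> sin a = 0 \<and> sin b = 0 \<and> cos a * cos b = -1)"

lemma AE_eq_0_if_Tprime_invariant: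
  assumes "has_sign_reversing_element G"
    and "\<forall>k\<in>G. AE z in M. Tprime k \<phi> z = \<phi> z"
  shows "AE z in M. \<phi> z = 0"
proof -
  obtain a b where ab: "(rot a, rot b) \<in> G" "sin a = 0" "sin b = 0" "cos a * cos b = -1"
    using assms(1) unfolding has_sign_reversing_element_def by blast
  have "AE z in M. Tprime (rot a, rot b) \<phi> z = \<phi> z"
    using assms(2) ab(1) by blast
  then show ?thesis
    by (rule eventually_mono) (simp add: Tprime_rot_sin_eq_0[OF ab(2,3)] ab(4))
qed

lemma has_sign_reversing_element_SO2xSO2: "has_sign_reversing_element SO2xSO2"
  unfolding has_sign_reversing_element_def SO2xSO2_def
  by (rule exI[of _ pi], rule exI[of _ 0]) auto

lemma has_sign_reversing_element_S1xC:
  assumes "N \<ge> 1"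
  shows "has_sign_reversing_element (S1xC N)"
proof -
  have "(rot pi, rot 0) \<in> S1xC N"
    using assms unfolding S1xC_def by (auto intro!: exI[of _ pi] exI[of _ "0::nat"])
  then show ?thesis
    unfolding has_sign_reversing_element_def by (intro exI[of _ pi] exI[of _ 0]) auto
qed

lemma has_sign_reversing_element_CxS1:
  assumes "N \<ge> 1"
  shows "has_sign_reversing_element (CxS1 N)"
proof -
  have "(rot 0, rot pi) \<in> CxS1 N"
    using assms unfolding CxS1_def by (auto intro!: exI[of _ pi] exI[of _ "0::nat"])
  then show ?thesis
    unfolding has_sign_reversing_element_def by (intro exI[of _ 0] exI[of _ pi]) auto
qed

text \<open>If \<open>q0\<close> or \<open>p0\<close> is even, coprimality makes the other odd and \<open>\<theta> = \<pi>\<close> gives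
 \<open>(\<plusminus>I, \<mp>I)\<close>; otherwise \<open>N\<close> is even and \<open>\<theta> = 0\<close>, \<open>i = N/2\<close> gives \<open>(I, -I)\<close>.\<close>
lemma has_sign_reversing_element_Hgrp:
  assumes "N \<ge> 1" "coprime q0 p0" "even N \<or> even q0 \<or> even p0"
  shows "has_sign_reversing_element (Hgrp N q0 p0)"
proof (cases "even q0 \<or> even p0")
  case True
  have parity: "even q0 \<noteq> even p0"
    using True assms(2) by (metis coprime_common_divisor dvd_refl odd_one)
  have "(rot (of_int q0 * pi), rot (of_int p0 * pi)) \<in> Hgrp N q0 p0"
    using assms(1) unfolding Hgrp_def by (auto intro!: exI[of _ pi] exI[of _ "0::nat"])
  then show ?thesis
    unfolding has_sign_reversing_element_def
    by (intro exI[of _ "of_int q0 * pi"] exI[of _ "of_int p0 * pi"])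
      (use parity in \<open>auto simp: mult.commute[of _ pi]\<close>)
next
  case False
  then obtain M where M: "N = 2 * M" using assms(3) by auto
  have "2 * pi * real M / real N = pi" using M assms(1) by auto
  then have "(rot 0, rot pi) \<in> Hgrp N q0 p0"
    using M assms(1) unfolding Hgrp_def by (auto intro!: exI[of _ "0::real"] exI[of _ M])
  then show ?thesis
    unfolding has_sign_reversing_element_def by (intro exI[of _ 0] exI[of _ pi]) auto
qed

theorem mainTheorem4:
  fixes G :: "(mat2 \<times> mat2) set" and \<phi> :: "real \<times> real \<Rightarrow> real"
  assumes G: "G = SO2xSO2
     \<or> (\<exists>N::nat. N \<ge> 1 \<and> G = S1xC N)
     \<or> (\<exists>N::nat. N \<ge> 1 \<and> G = CxS1 N)
     \<or> (\<exists>(N::nat) (q0::int) (p0::int). N \<ge> 1 \<and> coprime q0 p0 \<and> p0 > 0 \<and> q0 \<noteq> 0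
           \<and> (even N \<or> even q0 \<or> even p0) \<and> G = Hgrp N q0 p0)"
    and meas: "\<phi> \<in> borel_measurable lam"
    and sq: "integrable lam (\<lambda>z. (\<phi> z)\<^sup>2)"
    and inv: "\<forall>k\<in>G. AE z in lam. Tprime k \<phi> z = \<phi> z"
  shows "AE z in lam. \<phi> z = 0"
proof -
  from G have "has_sign_reversing_element G"
    using has_sign_reversing_element_SO2xSO2 has_sign_reversing_element_S1xC
      has_sign_reversing_element_CxS1 has_sign_reversing_element_Hgrp
    by blast
  then show ?thesis using inv by (rule AE_eq_0_if_Tprime_invariant)
qed

end
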